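(* Let $G$ be a non-regular simple graph on $n$ vertices such that $F_k(G)$ is regular for some integer $k$ with $2\le k\le n-2$. Then $G$ is isomorphic to the star $K_{1,n-1}$ or to its complement $\overline{K_{1,n-1}}$, and in both cases $k=n/2$.
   Context: For a simple graph $G=(V,E)$ on $n$ vertices and an integer $1\le k<n$, the $k$-token graph $F_k(G)$ is the graph whose vertices are all $k$-element subsets of $V$, two such subsets $A,B$ being adjacent whenever their symmetric difference $A\triangle B$ is a pair $\{a,b\}$ with $a$ adjacent to $b$ in $G$. *)

theory Defs
  imports Main
begin

definition simple_graph :: "'a set \<Rightarrow> ('a \<Rightarrow> 'a \<Rightarrow> bool) \<Rightarrow> bool" where
  "simple_graph V E \<longleftrightarrow> finite V \<and> (\<forall>x y. E x y \<longrightarrow> x \<in> V \<and> y \<in> V)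
     \<and> (\<forall>x y. E x y \<longrightarrow> E y x) \<and> (\<forall>x. \<not> E x x)"

definition degree :: "'a set \<Rightarrow> ('a \<Rightarrow> 'a \<Rightarrow> bool) \<Rightarrow> 'a \<Rightarrow> nat" where
  "degree V E v = card {u \<in> V. E v u}"

definition regular :: "'a set \<Rightarrow> ('a \<Rightarrow> 'a \<Rightarrow> bool) \<Rightarrow> bool" where
  "regular V E \<longleftrightarrow> (\<exists>d. \<forall>v \<in> V. degree V E v = d)"

text \<open>The k-token graph F_k(G): vertices are the k-subsets of V; A, B adjacent iff
  their symmetric difference is a pair {a,b} with a adjacent to b in G.\<close>
definition token_vertices :: "'a set \<Rightarrow> nat \<Rightarrow> 'a set set" where
  "token_vertices V k = {A. A \<subseteq> V \<and> card A = k}"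

definition token_adj :: "('a \<Rightarrow> 'a \<Rightarrow> bool) \<Rightarrow> 'a set \<Rightarrow> 'a set \<Rightarrow> bool" where
  "token_adj E A B \<longleftrightarrow> (\<exists>a b. (A - B) \<union> (B - A) = {a, b} \<and> E a b)"

definition graph_iso :: "'a set \<Rightarrow> ('a \<Rightarrow> 'a \<Rightarrow> bool) \<Rightarrow> 'b set \<Rightarrow> ('b \<Rightarrow> 'b \<Rightarrow> bool) \<Rightarrow> bool" where
  "graph_iso V E W F \<longleftrightarrow> (\<exists>f. bij_betw f V W \<and> (\<forall>x \<in> V. \<forall>y \<in> V. E x y \<longleftrightarrow> F (f x) (f y)))"

definition compl_graph :: "'a set \<Rightarrow> ('a \<Rightarrow> 'a \<Rightarrow> bool) \<Rightarrow> 'a \<Rightarrow> 'a \<Rightarrow> bool" where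
  "compl_graph V E x y \<longleftrightarrow> x \<in> V \<and> y \<in> V \<and> x \<noteq> y \<and> \<not> E x y"

definition star_vertices :: "nat \<Rightarrow> nat set" where
  "star_vertices n = {0..<n}"

definition star_edges :: "nat \<Rightarrow> nat \<Rightarrow> nat \<Rightarrow> bool" where
  "star_edges n x y \<longleftrightarrow> x < n \<and> y < n \<and> x \<noteq> y \<and> (x = 0 \<or> y = 0)"

end

theory Submission
  imports Defs
begin

text \<open>The degree of a \<open>k\<close>-set \<open>A\<close> in \<open>F\<^sub>k(G)\<close> is the number of edges of \<open>G\<close> between \<open>A\<close>
  and \<open>V - A\<close>, so regularity of \<open>F\<^sub>k(G)\<close> says that this cut size is the same for all \<open>k\<close>-sets.
  Replacing \<open>y\<close> by \<open>x\<close> in a \<open>k\<close>-set \<open>S + y\<close> changes the cut by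
  \<open>deg x - deg y - 2 (e(x,S) - e(y,S))\<close>; comparing two such sets \<open>S\<close> that differ in one element
  shows that \<open>t = [xw \<in> E] - [yw \<in> E]\<close> does not depend on \<open>w \<notin> {x, y}\<close>. Counting in \<open>G\<close> gives
  \<open>deg x - deg y = (n - 2) t\<close>, counting in a cut gives \<open>deg x - deg y = 2 (k - 1) t\<close>. For \<open>x\<close>, \<open>y\<close> of
  different degrees this forces \<open>t = \<plusminus>1\<close> and \<open>n = 2k\<close>: one of them is adjacent to all vertices
  outside \<open>{x, y}\<close> and the other to none of them. One more exchange shows that the remaining vertices
  form an independent set if \<open>x\<close> and \<open>y\<close> are adjacent and a clique otherwise, i.e.\ \<open>G\<close> is a star
  or the complement of a star.\<close>

lemma simple_graphD:
  assumes "simple_graph V E"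
  shows "finite V" and "E x y \<Longrightarrow> E y x" and "\<not> E x x"
  using assms unfolding simple_graph_def by auto

lemma inj_on_exchange: "inj_on (\<lambda>(a, b). insert b (A - {a})) (A \<times> - A)"
proof (rule inj_onI, clarsimp)
  fix a b a' b'
  assume "a \<in> A" "b \<notin> A" "a' \<in> A" "b' \<notin> A" and eq: "insert b (A - {a}) = insert b' (A - {a'})"
  have "b = b'" using eq \<open>b \<notin> A\<close> \<open>b' \<notin> A\<close> by blast
  moreover have "a = a'"
  proof (rule ccontr)
    assume "a \<noteq> a'"
    with \<open>a \<in> A\<close> have "a \<in> insert b (A - {a})" by (simp add: eq)
    with \<open>a \<in> A\<close> \<open>b \<notin> A\<close> show False by auto
  qed
  ultimately show "a = a' \<and> b = b'" by simp
qed

lemma token_adj_iff_exchange: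
  assumes sym: "\<And>x y. E x y \<Longrightarrow> E y x" and irr: "\<And>x. \<not> E x x"
    and fin: "finite A" "finite B" and card: "card A = card B"
  shows "token_adj E A B \<longleftrightarrow> (\<exists>a b. a \<in> A \<and> b \<notin> A \<and> E a b \<and> B = insert b (A - {a}))"
proof
  assume "token_adj E A B"
  then obtain a b where sd: "(A - B) \<union> (B - A) = {a, b}" and "E a b"
    unfolding token_adj_def by blast
  have "card (A - B) = card (B - A)"
    using card fin by (metis card_Diff_subset_Int finite_Int inf_commute)
  moreover have "card (A - B) + card (B - A) = 2"
  proof -
    have "card ((A - B) \<union> (B - A)) = card (A - B) + card (B - A)"
      using fin by (intro card_Un_disjoint) auto
    moreover have "a \<noteq> b" using irr \<open>E a b\<close> by blast
    ultimately show ?thesis using sd by simp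
  qed
  ultimately have "card (A - B) = 1" "card (B - A) = 1" by simp_all
  then obtain x y where "A - B = {x}" "B - A = {y}" by (meson card_1_singletonE)
  with sd \<open>E a b\<close> sym have "x \<in> A" "y \<notin> A" "E x y" "B = insert y (A - {x})"
    by (auto simp: doubleton_eq_iff)
  then show "\<exists>a b. a \<in> A \<and> b \<notin> A \<and> E a b \<and> B = insert b (A - {a})" by blast
next
  assume "\<exists>a b. a \<in> A \<and> b \<notin> A \<and> E a b \<and> B = insert b (A - {a})"
  then obtain a b where "a \<in> A" "b \<notin> A" "E a b" "B = insert b (A - {a})" by blast
  then have "(A - B) \<union> (B - A) = {a, b}" by auto
  with \<open>E a b\<close> show "token_adj E A B" unfolding token_adj_def by blast
qed

lemma token_neighbours_eq_exchanges:
  assumes G: "simple_graph V E" and A: "A \<subseteq> V" "card A = k"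
  shows "{B \<in> token_vertices V k. token_adj E A B}
    = (\<lambda>(a, b). insert b (A - {a})) ` (SIGMA a:A. {b \<in> V - A. E a b})"
    (is "?N = ?exchange ` ?P")
proof
  have finA: "finite A" using A finite_subset simple_graphD(1)[OF G] by blast
  show "?N \<subseteq> ?exchange ` ?P"
  proof
    fix B assume "B \<in> ?N"
    then have B: "B \<subseteq> V" "card B = k" and "token_adj E A B" by (auto simp: token_vertices_def)
    have "finite B" using B finite_subset simple_graphD(1)[OF G] by blast
    with \<open>token_adj E A B\<close> obtain a b where "a \<in> A" "b \<notin> A" "E a b" "B = insert b (A - {a})"
      using token_adj_iff_exchange[of E A B] simple_graphD[OF G] finA A B by auto
    moreover have "b \<in> V" using B \<open>B = insert b (A - {a})\<close> by blast
    ultimately show "B \<in> ?exchange ` ?P" by force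
  qed
  show "?exchange ` ?P \<subseteq> ?N"
  proof (rule image_subsetI)
    fix p assume "p \<in> ?P"
    then obtain a b where p: "p = (a, b)" and ab: "a \<in> A" "b \<in> V" "b \<notin> A" "E a b" by blast
    have "card A > 0" using ab finA card_gt_0_iff by blast
    then have "card (insert b (A - {a})) = k" using A ab finA by (simp add: card_Diff_singleton)
    moreover have "(A - insert b (A - {a})) \<union> (insert b (A - {a}) - A) = {a, b}" using ab by auto
    then have "token_adj E A (insert b (A - {a}))" using \<open>E a b\<close> unfolding token_adj_def by blast
    ultimately show "?exchange p \<in> ?N" using A ab p by (auto simp: token_vertices_def)
  qed
qed

definition cut_size :: "'a set \<Rightarrow> ('a \<Rightarrow> 'a \<Rightarrow> bool) \<Rightarrow> 'a set \<Rightarrow> int" where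
  "cut_size V E A = (\<Sum>a\<in>A. \<Sum>b\<in>V - A. of_bool (E a b))"

lemma token_degree_eq_cut_size:
  assumes G: "simple_graph V E" and A: "A \<subseteq> V" "card A = k"
  shows "int (degree (token_vertices V k) (token_adj E) A) = cut_size V E A"
proof -
  have finA: "finite A" using A finite_subset simple_graphD(1)[OF G] by blast
  have "inj_on (\<lambda>(a, b). insert b (A - {a})) (SIGMA a:A. {b \<in> V - A. E a b})"
    by (rule inj_on_subset[OF inj_on_exchange]) auto
  then have "degree (token_vertices V k) (token_adj E) A = card (SIGMA a:A. {b \<in> V - A. E a b})"
    unfolding degree_def token_neighbours_eq_exchanges[OF G A] by (rule card_image)
  also have "\<dots> = (\<Sum>a\<in>A. card {b \<in> V - A. E a b})"
    using finA simple_graphD(1)[OF G] by (intro card_SigmaI) auto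
  finally show ?thesis
    unfolding cut_size_def using simple_graphD(1)[OF G] by (simp add: Int_def conj_commute)
qed

lemma degree_eq_sum_of_bool:
  "finite V \<Longrightarrow> int (degree V E v) = (\<Sum>b\<in>V. of_bool (E v b))"
  by (simp add: degree_def Int_def conj_commute)

lemma cut_size_insert:
  assumes G: "simple_graph V E" and S: "S \<subseteq> V" and x: "x \<in> V" "x \<notin> S"
  shows "cut_size V E (insert x S)
    = cut_size V E S + int (degree V E x) - 2 * (\<Sum>s\<in>S. of_bool (E x s))"
proof -
  have finV: "finite V" using simple_graphD(1)[OF G] .
  have finS: "finite S" using S finV by (rule finite_subset)
  have sym: "E a x \<longleftrightarrow> E x a" for a using simple_graphD(2)[OF G] by blast
  have drop_x: "(\<Sum>b\<in>V - insert x S. of_bool (E a b))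
      = (\<Sum>b\<in>V - S. of_bool (E a b)) - (of_bool (E a x) :: int)" for a
    unfolding Diff_insert[of V x S] using finV x by (simp add: sum_diff1 del: sum_of_bool_eq)
  have "cut_size V E (insert x S)
      = (\<Sum>b\<in>V - insert x S. of_bool (E x b)) + (\<Sum>a\<in>S. \<Sum>b\<in>V - insert x S. of_bool (E a b))"
    unfolding cut_size_def using finS x by (simp del: sum_of_bool_eq)
  also have "\<dots> = (\<Sum>b\<in>V - S. of_bool (E x b)) + cut_size V E S - (\<Sum>s\<in>S. of_bool (E x s))"
    unfolding drop_x cut_size_def
    by (simp add: sum_subtractf sym simple_graphD(3)[OF G] del: sum_of_bool_eq)
  also have "(\<Sum>b\<in>V - S. of_bool (E x b)) = int (degree V E x) - (\<Sum>s\<in>S. of_bool (E x s))"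
    using finV S by (simp add: sum_diff degree_eq_sum_of_bool del: sum_of_bool_eq)
  finally show ?thesis by simp
qed

lemma cut_size_exchange:
  assumes G: "simple_graph V E" and S: "S \<subseteq> V" and xy: "x \<in> V - S" "y \<in> V - S"
  shows "cut_size V E (insert x S) - cut_size V E (insert y S)
    = int (degree V E x) - int (degree V E y) - 2 * (\<Sum>s\<in>S. of_bool (E x s) - of_bool (E y s))"
  using cut_size_insert[OF G S, of x] cut_size_insert[OF G S, of y] xy
  by (simp add: sum_subtractf del: sum_of_bool_eq)

definition cut_uniform :: "'a set \<Rightarrow> ('a \<Rightarrow> 'a \<Rightarrow> bool) \<Rightarrow> nat \<Rightarrow> bool" where
  "cut_uniform V E k \<longleftrightarrow> (\<exists>c. \<forall>A. A \<subseteq> V \<longrightarrow> card A = k \<longrightarrow> cut_size V E A = c)"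

lemma regular_token_graph_imp_cut_uniform:
  assumes G: "simple_graph V E" and "regular (token_vertices V k) (token_adj E)"
  shows "cut_uniform V E k"
proof -
  obtain d where "\<forall>A \<in> token_vertices V k. degree (token_vertices V k) (token_adj E) A = d"
    using assms(2) unfolding regular_def by blast
  then have "cut_size V E A = int d" if "A \<subseteq> V" "card A = k" for A
    using that token_degree_eq_cut_size[OF G that] by (simp add: token_vertices_def)
  then show ?thesis unfolding cut_uniform_def by blast
qed

lemma cut_uniform_degree_diff:
  assumes G: "simple_graph V E" and U: "cut_uniform V E k"
    and S: "S \<subseteq> V" "card S + 1 = k" and xy: "x \<in> V - S" "y \<in> V - S"
  shows "int (degree V E x) - int (degree V E y) = 2 * (\<Sum>s\<in>S. of_bool (E x s) - of_bool (E y s))"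
proof -
  obtain c where c: "\<And>A. A \<subseteq> V \<Longrightarrow> card A = k \<Longrightarrow> cut_size V E A = c"
    using U unfolding cut_uniform_def by blast
  have "finite S" using S(1) simple_graphD(1)[OF G] by (rule finite_subset)
  then have "cut_size V E (insert x S) = cut_size V E (insert y S)"
    using c[of "insert x S"] c[of "insert y S"] S xy by simp
  then show ?thesis using cut_size_exchange[OF G S(1) xy] by simp
qed

lemma cut_uniform_adj_diff_eq:
  assumes G: "simple_graph V E" and U: "cut_uniform V E k"
    and k: "2 \<le> k" "k + 2 \<le> card V"
    and V: "x \<in> V" "y \<in> V" "w \<in> V" "w' \<in> V"
    and distinct: "distinct [x, y, w, w']"
  shows "of_bool (E x w) - of_bool (E y w) = (of_bool (E x w') - of_bool (E y w') :: int)"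
proof -
  have "card (V - {x, y, w, w'}) = card V - 4"
    using V distinct simple_graphD(1)[OF G] by (simp add: card_Diff_subset)
  then have "k - 2 \<le> card (V - {x, y, w, w'})" using k by linarith
  then obtain R where R: "R \<subseteq> V - {x, y, w, w'}" "card R = k - 2" "finite R"
    by (rule obtain_subset_with_card_n)
  have "w \<notin> R" "w' \<notin> R" using R by auto
  have diff: "int (degree V E x) - int (degree V E y)
      = 2 * (\<Sum>s\<in>insert v R. of_bool (E x s) - of_bool (E y s))" if "v \<in> {w, w'}" for v
  proof (rule cut_uniform_degree_diff[OF G U])
    show "insert v R \<subseteq> V" using R V that by auto
    show "card (insert v R) + 1 = k" using R k that \<open>w \<notin> R\<close> \<open>w' \<notin> R\<close> by auto
    show "x \<in> V - insert v R" "y \<in> V - insert v R" using R V distinct that by auto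
  qed
  show ?thesis using diff[of w] diff[of w'] \<open>w \<notin> R\<close> \<open>w' \<notin> R\<close> \<open>finite R\<close> by simp
qed

lemma cut_uniform_degree_diff_eq:
  assumes G: "simple_graph V E" and U: "cut_uniform V E k"
    and k: "2 \<le> k" "k + 2 \<le> card V"
    and V: "x \<in> V" "y \<in> V" "w \<in> V" and distinct: "distinct [x, y, w]"
  shows "int (degree V E x) - int (degree V E y) = 2 * (int k - 1) * (of_bool (E x w) - of_bool (E y w))"
proof -
  have "card (V - {x, y, w}) = card V - 3"
    using V distinct simple_graphD(1)[OF G] by (simp add: card_Diff_subset)
  then have "k - 2 \<le> card (V - {x, y, w})" using k by linarith
  then obtain R where R: "R \<subseteq> V - {x, y, w}" "card R = k - 2" "finite R"
    by (rule obtain_subset_with_card_n)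
  have "(\<Sum>s\<in>R. of_bool (E x s) - of_bool (E y s)) = (\<Sum>s\<in>R. of_bool (E x w) - of_bool (E y w) :: int)"
    using R V distinct by (intro sum.cong refl cut_uniform_adj_diff_eq[OF G U k, symmetric]) auto
  also have "\<dots> = (int k - 2) * (of_bool (E x w) - of_bool (E y w))"
    using R k by (simp add: of_nat_diff)
  finally have sum_R: "(\<Sum>s\<in>R. of_bool (E x s) - of_bool (E y s))
      = (int k - 2) * (of_bool (E x w) - of_bool (E y w))" .
  have "w \<notin> R" using R by auto
  have "int (degree V E x) - int (degree V E y)
      = 2 * (\<Sum>s\<in>insert w R. of_bool (E x s) - of_bool (E y s))"
  proof (rule cut_uniform_degree_diff[OF G U])
    show "insert w R \<subseteq> V" using R V by auto
    show "card (insert w R) + 1 = k" using R k \<open>w \<notin> R\<close> by auto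
    show "x \<in> V - insert w R" "y \<in> V - insert w R" using R V distinct by auto
  qed
  then have "int (degree V E x) - int (degree V E y)
      = 2 * (of_bool (E x w) - of_bool (E y w) + (\<Sum>s\<in>R. of_bool (E x s) - of_bool (E y s)))"
    using \<open>w \<notin> R\<close> \<open>finite R\<close> by simp
  then show ?thesis unfolding sum_R by (simp add: algebra_simps)
qed

lemma degree_diff_eq_card_mult:
  assumes G: "simple_graph V E" and xy: "x \<in> V" "y \<in> V" "x \<noteq> y"
    and const: "\<And>w. w \<in> V - {x, y} \<Longrightarrow> of_bool (E x w) - of_bool (E y w) = t"
  shows "int (degree V E x) - int (degree V E y) = (int (card V) - 2) * t"
proof -
  have finV: "finite V" using simple_graphD(1)[OF G] .
  have V: "V = insert x (insert y (V - {x, y}))" using xy by auto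
  have "E x y \<longleftrightarrow> E y x" using simple_graphD(2)[OF G] by blast
  then have "int (degree V E x) - int (degree V E y) = (\<Sum>w\<in>V - {x, y}. of_bool (E x w) - of_bool (E y w))"
    unfolding degree_eq_sum_of_bool[OF finV] sum_subtractf[symmetric]
    using finV xy by (subst V) (simp add: simple_graphD(3)[OF G] del: sum_of_bool_eq)
  also have "\<dots> = (\<Sum>w\<in>V - {x, y}. t)" using const by simp
  also have "\<dots> = (int (card V) - 2) * t"
  proof -
    have "card {x, y} \<le> card V" using xy finV by (intro card_mono) auto
    then show ?thesis using xy finV by (simp add: card_Diff_subset of_nat_diff)
  qed
  finally show ?thesis .
qed

lemma cut_uniform_unequal_degrees:
  assumes G: "simple_graph V E" and U: "cut_uniform V E k"
    and k: "2 \<le> k" "k + 2 \<le> card V"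
    and xy: "x \<in> V" "y \<in> V" and deg: "degree V E x \<noteq> degree V E y"
  shows "2 * k = card V"
    and "\<exists>a \<in> {x, y}. \<exists>b \<in> {x, y}. a \<noteq> b \<and> (\<forall>w \<in> V - {a, b}. E a w \<and> \<not> E b w)"
proof -
  have finV: "finite V" using simple_graphD(1)[OF G] .
  have "x \<noteq> y" using deg by auto
  have "card (V - {x, y}) = card V - 2" using xy \<open>x \<noteq> y\<close> finV by (simp add: card_Diff_subset)
  then have "card (V - {x, y}) > 0" using k by linarith
  then have "V - {x, y} \<noteq> {}" by (simp add: card_gt_0_iff)
  then obtain w where w: "w \<in> V - {x, y}" by blast
  define t :: int where "t = of_bool (E x w) - of_bool (E y w)"
  have const: "of_bool (E x v) - of_bool (E y v) = t" if "v \<in> V - {x, y}" for v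
  proof (cases "v = w")
    case False
    then show ?thesis unfolding t_def using that w xy \<open>x \<noteq> y\<close>
      by (intro cut_uniform_adj_diff_eq[OF G U k, symmetric]) auto
  qed (simp add: t_def)
  have by_card: "int (degree V E x) - int (degree V E y) = (int (card V) - 2) * t"
    using degree_diff_eq_card_mult[OF G xy \<open>x \<noteq> y\<close> const] .
  have by_token: "int (degree V E x) - int (degree V E y) = 2 * (int k - 1) * t"
    unfolding t_def using w xy \<open>x \<noteq> y\<close> by (intro cut_uniform_degree_diff_eq[OF G U k]) auto
  have "t \<noteq> 0" using by_card deg by auto
  then show "2 * k = card V" using by_card by_token by simp
  have x_dominates: "E x v \<and> \<not> E y v" if "t = 1" "v \<in> V - {x, y}" for v
    using const[OF that(2)] that(1) by (cases "E x v"; cases "E y v") simp_all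
  have y_dominates: "E y v \<and> \<not> E x v" if "t = -1" "v \<in> V - {y, x}" for v
    using const[of v] that by (cases "E x v"; cases "E y v") (simp_all add: insert_commute)
  have "t = 1 \<or> t = -1" using \<open>t \<noteq> 0\<close> unfolding t_def by (cases "E x w"; cases "E y w") simp_all
  then show "\<exists>a \<in> {x, y}. \<exists>b \<in> {x, y}. a \<noteq> b \<and> (\<forall>w \<in> V - {a, b}. E a w \<and> \<not> E b w)"
  proof
    assume "t = 1"
    then show ?thesis using x_dominates \<open>x \<noteq> y\<close> by (intro bexI[of _ x] bexI[of _ y]) auto
  next
    assume "t = -1"
    then show ?thesis using y_dominates \<open>x \<noteq> y\<close> by (intro bexI[of _ y] bexI[of _ x]) auto
  qed
qed

lemma cut_uniform_star_or_co_star: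
  assumes G: "simple_graph V E" and U: "cut_uniform V E k"
    and k: "2 \<le> k" "k + 2 \<le> card V"
    and ab: "a \<in> V" "b \<in> V" "a \<noteq> b" and dominating: "\<forall>w \<in> V - {a, b}. E a w \<and> \<not> E b w"
  shows "(\<forall>u \<in> V. \<forall>v \<in> V. E u v \<longleftrightarrow> u \<noteq> v \<and> (u = a \<or> v = a))
    \<or> (\<forall>u \<in> V. \<forall>v \<in> V. E u v \<longleftrightarrow> u \<noteq> v \<and> u \<noteq> b \<and> v \<noteq> b)"
proof -
  have sym: "E u v \<longleftrightarrow> E v u" for u v using simple_graphD(2)[OF G] by blast
  have irr: "\<not> E u u" for u using simple_graphD(3)[OF G] .
  have rest: "E w w' \<longleftrightarrow> \<not> E a b" if "w \<in> V - {a, b}" "w' \<in> V - {a, b}" "w \<noteq> w'" for w w'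
  proof -
    have "of_bool (E a b) - of_bool (E w b) = (of_bool (E a w') - of_bool (E w w') :: int)"
      using that ab by (intro cut_uniform_adj_diff_eq[OF G U k]) auto
    moreover have "\<not> E w b" "E a w'" using dominating that sym by auto
    ultimately show ?thesis by (cases "E a b"; cases "E w w'") simp_all
  qed
  show ?thesis
  proof (cases "E a b")
    case True
    then show ?thesis using rest dominating sym irr ab by blast
  next
    case False
    then show ?thesis using rest dominating sym irr ab by blast
  qed
qed

lemma bij_betw_lessThan_centred:
  assumes "finite V" "card V = n" "c \<in> V"
  obtains f where "bij_betw f V {0..<n}" and "\<forall>x \<in> V. f x = 0 \<longleftrightarrow> x = c"
proof -
  have "card (V - {c}) = card {1..<n}" using assms by simp
  then obtain g where g: "bij_betw g (V - {c}) {1..<n}"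
    using assms(1) finite_same_card_bij[of "V - {c}" "{1..<n}"] by auto
  have "n > 0" using assms card_gt_0_iff by blast
  with assms(3) have split: "(V - {c}) \<union> {c} = V" "{1..<n} \<union> {0} = {0..<n}" by auto
  have "bij_betw (g(c := 0)) (V - {c}) {1..<n}"
    using g bij_betw_cong[of "V - {c}" "g(c := 0)" g "{1..<n}"] by simp
  then have "bij_betw (g(c := 0)) ((V - {c}) \<union> {c}) ({1..<n} \<union> {0})"
    using notIn_Un_bij_betw[of c "V - {c}" "g(c := 0)" "{1..<n}"] by simp
  then have bij: "bij_betw (g(c := 0)) V {0..<n}" unfolding split .
  have "g x \<noteq> 0" if "x \<in> V - {c}" for x using bij_betw_apply[OF g that] by simp
  then have "\<forall>x \<in> V. (g(c := 0)) x = 0 \<longleftrightarrow> x = c" by auto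
  with bij show ?thesis using that by blast
qed

lemma graph_iso_star:
  assumes "finite V" "card V = n" "c \<in> V"
    and star: "\<forall>u \<in> V. \<forall>v \<in> V. E u v \<longleftrightarrow> u \<noteq> v \<and> (u = c \<or> v = c)"
  shows "graph_iso V E (star_vertices n) (star_edges n)"
proof -
  obtain f where f: "bij_betw f V {0..<n}" and centre: "\<forall>x \<in> V. f x = 0 \<longleftrightarrow> x = c"
    using bij_betw_lessThan_centred[OF assms(1-3)] .
  have "\<forall>x \<in> V. \<forall>y \<in> V. E x y \<longleftrightarrow> star_edges n (f x) (f y)"
    using star centre bij_betw_apply[OF f] inj_on_eq_iff[OF bij_betw_imp_inj_on[OF f]]
    by (auto simp: star_edges_def)
  with f show ?thesis unfolding graph_iso_def star_vertices_def by blast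
qed

lemma graph_iso_co_star:
  assumes "finite V" "card V = n" "c \<in> V"
    and co_star: "\<forall>u \<in> V. \<forall>v \<in> V. E u v \<longleftrightarrow> u \<noteq> v \<and> u \<noteq> c \<and> v \<noteq> c"
  shows "graph_iso V E (star_vertices n) (compl_graph (star_vertices n) (star_edges n))"
proof -
  obtain f where f: "bij_betw f V {0..<n}" and centre: "\<forall>x \<in> V. f x = 0 \<longleftrightarrow> x = c"
    using bij_betw_lessThan_centred[OF assms(1-3)] .
  have "\<forall>x \<in> V. \<forall>y \<in> V. E x y \<longleftrightarrow> compl_graph (star_vertices n) (star_edges n) (f x) (f y)"
    using co_star centre bij_betw_apply[OF f] inj_on_eq_iff[OF bij_betw_imp_inj_on[OF f]]
    by (auto simp: compl_graph_def star_vertices_def star_edges_def)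
  with f show ?thesis unfolding graph_iso_def star_vertices_def by blast
qed

theorem theorem4:
  fixes V :: "'a set" and E :: "'a \<Rightarrow> 'a \<Rightarrow> bool" and k n :: nat
  assumes "simple_graph V E"
    and "card V = n"
    and "\<not> regular V E"
    and "2 \<le> k" and "k \<le> n - 2"
    and "regular (token_vertices V k) (token_adj E)"
  shows "(graph_iso V E (star_vertices n) (star_edges n)
          \<or> graph_iso V E (star_vertices n) (compl_graph (star_vertices n) (star_edges n)))
         \<and> 2 * k = n"
proof -
  note G = assms(1)
  have U: "cut_uniform V E k" using regular_token_graph_imp_cut_uniform[OF G assms(6)] .
  have k: "2 \<le> k" "k + 2 \<le> card V" using assms(2,4,5) by linarith+
  obtain x y where xy: "x \<in> V" "y \<in> V" and deg: "degree V E x \<noteq> degree V E y"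
    using assms(3) unfolding regular_def by blast
  have half: "2 * k = n" using cut_uniform_unequal_degrees(1)[OF G U k xy deg] assms(2) by simp
  obtain a b where ab: "a \<in> V" "b \<in> V" "a \<noteq> b"
    and dominating: "\<forall>w \<in> V - {a, b}. E a w \<and> \<not> E b w"
    using cut_uniform_unequal_degrees(2)[OF G U k xy deg] xy by auto
  have finV: "finite V" using simple_graphD(1)[OF G] .
  show ?thesis
    using cut_uniform_star_or_co_star[OF G U k ab dominating] half
      graph_iso_star[OF finV assms(2) ab(1)] graph_iso_co_star[OF finV assms(2) ab(2)]
    by metis
qed

end
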